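(* Let $n\equiv 3\pmod 4$ with $n>3$. Let $1\le r<m$, let $M_r\in\mathfrak{C}_r$, and suppose $\det\tilde M_r>0$. Then $$\max\{\det E: E\in\mathfrak{E}_m\}>(n-3)\max\{\det E: E\in\mathfrak{E}_{m-1}\}.$$
   Context: Fix an integer $n\equiv 3\pmod 4$, $n>3$. For $m\ge1$, $\mathfrak{C}_m$ is the set of symmetric positive definite $m\times m$ integer matrices $C=(c_{ij})$ with $c_{ii}=n$ and $c_{ij}\equiv n\pmod 4$ for all $i,j$ (a finite set, since positive definiteness forces $|c_{ij}|<n$ for $i\neq j$). Given a fixed $M_r\in\mathfrak{C}_r$, for $m\ge r$, $\mathfrak{E}_m$ is the set of $E_m\in\mathfrak{C}_m$ whose leading $r\times r$ submatrix is $M_r$. For a square matrix $C$ of order $m$, $\tilde C$ denotes the matrix obtained from $C$ by replacing its $(m,m)$ entry by $3$. *)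

theory Defs
  imports "Jordan_Normal_Form.Determinant"
begin

definition pos_def_int :: "int mat \<Rightarrow> bool" where
  "pos_def_int C \<longleftrightarrow>
     (\<forall>x :: nat \<Rightarrow> real. (\<exists>i<dim_row C. x i \<noteq> 0) \<longrightarrow>
        (\<Sum>i<dim_row C. \<Sum>j<dim_row C. x i * real_of_int (C $$ (i,j)) * x j) > 0)"

definition CC :: "int \<Rightarrow> nat \<Rightarrow> int mat set" where
  "CC n m = {C. C \<in> carrier_mat m m \<and> transpose_mat C = C \<and> pos_def_int C
              \<and> (\<forall>i<m. C $$ (i,i) = n)
              \<and> (\<forall>i<m. \<forall>j<m. C $$ (i,j) mod 4 = n mod 4)}"

definition EE :: "int \<Rightarrow> int mat \<Rightarrow> nat \<Rightarrow> int mat set" where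
  "EE n M m = {E. E \<in> CC n m \<and> (\<forall>i<dim_row M. \<forall>j<dim_row M. E $$ (i,j) = M $$ (i,j))}"

definition tilde :: "int mat \<Rightarrow> int mat" where
  "tilde C = mat (dim_row C) (dim_col C)
     (\<lambda>(i,j). if i = dim_row C - 1 \<and> j = dim_col C - 1 then 3 else C $$ (i,j))"

end

theory Submission
  imports Defs
begin

text \<open>Let E be a maximiser of det on E_{m-1} and let F arise from E by appending a copy of its
last row and column, with 3 in place of n where the copy meets the old diagonal. Then F lies in
E_m, and its quadratic form is that of E at a shifted vector minus 2(n-3) x_{m-1} x_m. Together
with the Schur-complement bound det E' Q_E(u) \<ge> det E u_{m-1}^2 (E' the leading minor of E) this
gives det F \<ge> 2(n-3) det E - (n-3)^2 det E', so det F > (n-3) det E whenever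
det E > (n-3) det E'. At level r that hypothesis is det (tilde M) > 0; above it, it follows
inductively because E' ranges over E_{m-2}.\<close>

section \<open>Real quadratic forms of integer matrices\<close>

definition bilin :: "int mat \<Rightarrow> (nat \<Rightarrow> real) \<Rightarrow> (nat \<Rightarrow> real) \<Rightarrow> real" where
  "bilin A x y = (\<Sum>i<dim_row A. \<Sum>j<dim_row A. x i * real_of_int (A $$ (i,j)) * y j)"

abbreviation qform :: "int mat \<Rightarrow> (nat \<Rightarrow> real) \<Rightarrow> real" where
  "qform A x \<equiv> bilin A x x"

definition coord_vec :: "nat \<Rightarrow> nat \<Rightarrow> real" where
  "coord_vec a = (\<lambda>i. if i = a then 1 else 0)"

lemma pos_def_int_iff_qform:
  "pos_def_int C \<longleftrightarrow> (\<forall>x. (\<exists>i<dim_row C. x i \<noteq> 0) \<longrightarrow> qform C x > 0)"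
  unfolding pos_def_int_def bilin_def by simp

lemma qform_nonneg:
  assumes "pos_def_int C"
  shows "qform C x \<ge> 0"
proof (cases "\<exists>i<dim_row C. x i \<noteq> 0")
  case True
  then show ?thesis using assms unfolding pos_def_int_iff_qform by (auto intro: less_imp_le)
next
  case False
  then show ?thesis unfolding bilin_def by auto
qed

lemma qform_add_scaled:
  "qform A (\<lambda>i. u i + t * z i) = qform A u + t * bilin A u z + t * bilin A z u + t\<^sup>2 * qform A z"
proof -
  have "\<And>i j. (u i + t * z i) * real_of_int (A $$ (i,j)) * (u j + t * z j)
     = u i * real_of_int (A $$ (i,j)) * u j + t * (u i * real_of_int (A $$ (i,j)) * z j)
       + t * (z i * real_of_int (A $$ (i,j)) * u j) + t\<^sup>2 * (z i * real_of_int (A $$ (i,j)) * z j)"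
    by (simp add: algebra_simps power2_eq_square)
  then show ?thesis unfolding bilin_def by (simp add: sum.distrib sum_distrib_left)
qed

lemma symmetric_entry:
  assumes "A \<in> carrier_mat p p" "transpose_mat A = A" "i < p" "j < p"
  shows "A $$ (j,i) = A $$ (i,j)"
  using assms by (metis carrier_matD index_transpose_mat(1))

lemma bilin_commute:
  assumes "A \<in> carrier_mat p p" "transpose_mat A = A"
  shows "bilin A z u = bilin A u z"
proof -
  have "bilin A z u = (\<Sum>i<p. \<Sum>j<p. z i * real_of_int (A $$ (i,j)) * u j)"
    unfolding bilin_def using assms(1) by simp
  also have "\<dots> = (\<Sum>j<p. \<Sum>i<p. z i * real_of_int (A $$ (i,j)) * u j)"
    by (rule sum.swap)
  also have "\<dots> = bilin A u z"
    unfolding bilin_def using assms symmetric_entry[OF assms]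
    by (intro sum.cong refl) auto
  finally show ?thesis .
qed

lemma bilin_coord_vec_right:
  assumes "b < dim_row A"
  shows "bilin A x (coord_vec b) = (\<Sum>i<dim_row A. x i * real_of_int (A $$ (i,b)))"
  unfolding bilin_def coord_vec_def using assms
  by (intro sum.cong refl) (simp add: if_distrib cong: if_cong)

lemma bilin_coord_vec_left:
  assumes "a < dim_row A"
  shows "bilin A (coord_vec a) y = (\<Sum>j<dim_row A. real_of_int (A $$ (a,j)) * y j)"
proof -
  have "bilin A (coord_vec a) y
      = (\<Sum>i<dim_row A. if i = a then (\<Sum>j<dim_row A. real_of_int (A $$ (a,j)) * y j) else 0)"
    unfolding bilin_def coord_vec_def by (intro sum.cong refl) auto
  then show ?thesis using assms by simp
qed

lemma bilin_coord_vec: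
  assumes "a < dim_row A" "b < dim_row A"
  shows "bilin A (coord_vec a) (coord_vec b) = real_of_int (A $$ (a,b))"
  unfolding bilin_coord_vec_left[OF assms(1)] using assms(2)
  by (simp add: coord_vec_def if_distrib cong: if_cong)

lemma qform_bordered:
  assumes F: "F \<in> carrier_mat (Suc p) (Suc p)" and sym: "transpose_mat F = F"
  shows "qform F x = qform (mat_delete F p p) x
           + 2 * x p * (\<Sum>i<p. x i * real_of_int (F $$ (i,p))) + real_of_int (F $$ (p,p)) * (x p)\<^sup>2"
proof -
  have del: "qform (mat_delete F p p) x = (\<Sum>i<p. \<Sum>j<p. x i * real_of_int (F $$ (i,j)) * x j)"
    unfolding bilin_def using F by (auto intro!: sum.cong simp: mat_delete_def)
  have "(\<Sum>j<p. x p * real_of_int (F $$ (p,j)) * x j) = x p * (\<Sum>i<p. x i * real_of_int (F $$ (i,p)))"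
    using F sym by (auto simp: sum_distrib_left symmetric_entry intro!: sum.cong)
  then show ?thesis
    unfolding del unfolding bilin_def using F
    by (simp add: sum.distrib sum_distrib_left sum_distrib_right algebra_simps power2_eq_square)
qed

section \<open>Determinants of positive definite matrices\<close>

lemma adj_mat_column:
  assumes A: "A \<in> carrier_mat p p" and k: "k < p"
  defines "z \<equiv> \<lambda>i. real_of_int (adj_mat A $$ (i,k))"
  shows "bilin A u z = real_of_int (det A) * u k"
    and "z k = real_of_int (det (mat_delete A k k))"
proof -
  have row: "(\<Sum>j<p. real_of_int (A $$ (i,j)) * z j) = (if i = k then real_of_int (det A) else 0)"
    if i: "i < p" for i
  proof -
    have "(A * adj_mat A) $$ (i,k) = (\<Sum>j<p. A $$ (i,j) * adj_mat A $$ (j,k))"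
      using A adj_mat(1)[OF A] i k by (simp add: scalar_prod_def times_mat_def atLeast0LessThan)
    moreover have "(A * adj_mat A) $$ (i,k) = (if i = k then det A else 0)"
      unfolding adj_mat(2)[OF A] using i k by simp
    ultimately have "(\<Sum>j<p. A $$ (i,j) * adj_mat A $$ (j,k)) = (if i = k then det A else 0)"
      by simp
    then have "real_of_int (\<Sum>j<p. A $$ (i,j) * adj_mat A $$ (j,k))
        = (if i = k then real_of_int (det A) else 0)"
      by simp
    then show ?thesis unfolding z_def by simp
  qed
  have "bilin A u z = (\<Sum>i<p. u i * (\<Sum>j<p. real_of_int (A $$ (i,j)) * z j))"
    unfolding bilin_def using A by (simp add: sum_distrib_left mult.assoc)
  also have "\<dots> = real_of_int (det A) * u k"
    using k by (simp add: row if_distrib cong: if_cong)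
  finally show "bilin A u z = real_of_int (det A) * u k" .
  show "z k = real_of_int (det (mat_delete A k k))"
    unfolding z_def adj_mat_def cofactor_def using A k by simp
qed

lemma pos_def_int_mat_delete_last:
  assumes C: "C \<in> carrier_mat (Suc q) (Suc q)" and pd: "pos_def_int C"
  shows "pos_def_int (mat_delete C q q)"
  unfolding pos_def_int_iff_qform
proof (intro allI impI)
  fix x :: "nat \<Rightarrow> real"
  assume "\<exists>i<dim_row (mat_delete C q q). x i \<noteq> 0"
  then obtain i where i: "i < q" "x i \<noteq> 0" using C by auto
  define y where "y = (\<lambda>l. if l < q then x l else 0)"
  have "i < dim_row C" "y i \<noteq> 0" using i C unfolding y_def by auto
  then have "qform C y > 0" using pd unfolding pos_def_int_iff_qform by blast
  moreover have "qform C y = (\<Sum>i<q. \<Sum>j<q. x i * real_of_int (C $$ (i,j)) * x j)"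
    unfolding bilin_def y_def using C by simp
  moreover have "\<dots> = qform (mat_delete C q q) x"
    unfolding bilin_def using C by (auto intro!: sum.cong simp: mat_delete_def)
  ultimately show "qform (mat_delete C q q) x > 0" by simp
qed

lemma det_pos_if_pos_def_int:
  assumes "C \<in> carrier_mat p p" "pos_def_int C"
  shows "det C > 0"
  using assms
proof (induction p arbitrary: C)
  case 0
  then show ?case by simp
next
  case (Suc q)
  note C = Suc.prems(1)
  have D': "det (mat_delete C q q) > 0"
    using Suc.IH pos_def_int_mat_delete_last[OF C Suc.prems(2)] mat_delete_carrier[OF C] by simp
  define z where "z = (\<lambda>i. real_of_int (adj_mat C $$ (i,q)))"
  have zq: "z q = real_of_int (det (mat_delete C q q))"
    and Qz: "qform C z = real_of_int (det C) * z q"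
    using adj_mat_column[OF C, of q] unfolding z_def by auto
  have "qform C z > 0"
    using Suc.prems(2) zq D' C unfolding pos_def_int_iff_qform
    by (metis carrier_matD(1) lessI of_int_0_less_iff order_less_irrefl)
  then show ?case using Qz zq D' by (simp add: zero_less_mult_iff)
qed

lemma det_mat_delete_last_pos:
  assumes C: "C \<in> carrier_mat (Suc q) (Suc q)" and pd: "pos_def_int C"
  shows "det (mat_delete C q q) > 0"
  using det_pos_if_pos_def_int[OF mat_delete_carrier[OF C] pos_def_int_mat_delete_last[OF C pd]]
  by simp

text \<open>For the last adjugate column z one has B(u,z) = det C u_q and z_q = det C'; the bound
is Q(u + t z) \<ge> 0 at t = -u_q / det C'.\<close>

lemma det_delete_mult_qform_ge:
  assumes C: "C \<in> carrier_mat (Suc q) (Suc q)" and sym: "transpose_mat C = C"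
    and pd: "pos_def_int C"
  shows "real_of_int (det (mat_delete C q q)) * qform C u \<ge> real_of_int (det C) * (u q)\<^sup>2"
proof -
  define z where "z = (\<lambda>i. real_of_int (adj_mat C $$ (i,q)))"
  define D where "D = real_of_int (det C)"
  define D' where "D' = real_of_int (det (mat_delete C q q))"
  have D'pos: "D' > 0" unfolding D'_def
    using det_mat_delete_last_pos[OF C pd] by simp
  have zq: "z q = D'" and Qz: "qform C z = D * D'" and Bz: "bilin C u z = D * u q"
    using adj_mat_column[OF C, of q] unfolding z_def D_def D'_def by auto
  have Bz': "bilin C z u = D * u q" using bilin_commute[OF C sym] Bz by simp
  define t where "t = - u q / D'"
  have "0 \<le> qform C (\<lambda>i. u i + t * z i)" using qform_nonneg[OF pd] .
  also have "\<dots> = qform C u - D * (u q)\<^sup>2 / D'"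
    unfolding qform_add_scaled Bz Bz' Qz t_def using D'pos
    by (simp add: field_simps power2_eq_square)
  finally show ?thesis using D'pos unfolding D_def[symmetric] D'_def[symmetric]
    by (simp add: pos_divide_le_eq mult.commute)
qed

lemma qform_ge_last_coord:
  assumes C: "C \<in> carrier_mat (Suc q) (Suc q)" and sym: "transpose_mat C = C"
    and pd: "pos_def_int C"
    and c: "c * real_of_int (det (mat_delete C q q)) \<le> real_of_int (det C)"
  shows "qform C u \<ge> c * (u q)\<^sup>2"
proof -
  define D' where "D' = real_of_int (det (mat_delete C q q))"
  have D'pos: "D' > 0" unfolding D'_def
    using det_mat_delete_last_pos[OF C pd] by simp
  have "D' * (c * (u q)\<^sup>2) \<le> real_of_int (det C) * (u q)\<^sup>2"
    using mult_right_mono[OF c zero_le_power2[of "u q"]] unfolding D'_def by (simp add: ac_simps)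
  also have "\<dots> \<le> D' * qform C u"
    using det_delete_mult_qform_ge[OF C sym pd] unfolding D'_def .
  finally show ?thesis using D'pos by simp
qed

lemma CC_offdiag_bound:
  assumes C: "C \<in> CC n m" and i: "i < m" and j: "j < m" and ij: "i \<noteq> j"
  shows "\<bar>C $$ (i,j)\<bar> < n"
proof -
  have Cc: "C \<in> carrier_mat m m" and sym: "transpose_mat C = C" and pd: "pos_def_int C"
    and diag: "\<And>i. i < m \<Longrightarrow> C $$ (i,i) = n"
    using C unfolding CC_def by auto
  have entry: "bilin C (coord_vec a) (coord_vec b) = real_of_int (C $$ (a,b))" if "a < m" "b < m" for a b
    using bilin_coord_vec[of a C b] Cc that by simp
  have pos: "0 < 2 * real_of_int n + 2 * t * real_of_int (C $$ (i,j))" if t: "t\<^sup>2 = 1" for t :: real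
  proof -
    have "\<exists>l<dim_row C. coord_vec i l + t * coord_vec j l \<noteq> 0"
      using Cc i ij by (intro exI[of _ i]) (simp add: coord_vec_def)
    then have "qform C (\<lambda>l. coord_vec i l + t * coord_vec j l) > 0"
      by (rule pd[unfolded pos_def_int_iff_qform, rule_format])
    then show ?thesis
      unfolding qform_add_scaled entry[OF i j] entry[OF j i] entry[OF i i] entry[OF j j] t
      by (simp add: diag i j symmetric_entry[OF Cc sym i j])
  qed
  have "real_of_int \<bar>C $$ (i,j)\<bar> < real_of_int n" using pos[of 1] pos[of "-1"] by simp
  then show ?thesis by linarith
qed

lemma finite_CC:
  assumes n: "n > 0"
  shows "finite (CC n m)"
proof -
  have "CC n m \<subseteq> (\<lambda>f. mat m m f) ` (PiE ({..<m} \<times> {..<m}) (\<lambda>_. {-n..n}))"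
  proof
    fix C assume C: "C \<in> CC n m"
    then have Cc: "C \<in> carrier_mat m m" unfolding CC_def by auto
    have bound: "C $$ (i,j) \<in> {-n..n}" if "i < m" "j < m" for i j
      using CC_offdiag_bound[OF C that] C that n unfolding CC_def by (cases "i = j") auto
    define f where "f = restrict (\<lambda>p. C $$ p) ({..<m} \<times> {..<m})"
    have "f \<in> PiE ({..<m} \<times> {..<m}) (\<lambda>_. {-n..n})"
      unfolding f_def using bound by auto
    moreover have "C = mat m m f"
      by (rule eq_matI) (use Cc in \<open>auto simp: f_def\<close>)
    ultimately show "C \<in> (\<lambda>f. mat m m f) ` (PiE ({..<m} \<times> {..<m}) (\<lambda>_. {-n..n}))" by blast
  qed
  then show ?thesis by (rule finite_subset) (intro finite_imageI finite_PiE; simp)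
qed

lemma finite_EE: "n > 0 \<Longrightarrow> finite (EE n M m)"
  using finite_CC[of n m] unfolding EE_def by (auto intro: finite_subset)

lemma EE_self:
  assumes "M \<in> CC n r"
  shows "EE n M r = {M}"
proof -
  have Mc: "M \<in> carrier_mat r r" using assms unfolding CC_def by auto
  have "E = M" if "E \<in> EE n M r" for E
    by (rule eq_matI) (use that Mc in \<open>auto simp: EE_def CC_def\<close>)
  then show ?thesis using assms unfolding EE_def by auto
qed

lemma CC_mat_delete_last:
  assumes G: "G \<in> CC n (Suc q)"
  shows "mat_delete G q q \<in> CC n q"
proof -
  have Gc: "G \<in> carrier_mat (Suc q) (Suc q)" and sym: "transpose_mat G = G"
    and pd: "pos_def_int G"
    using G unfolding CC_def by auto
  have c: "mat_delete G q q \<in> carrier_mat q q" using mat_delete_carrier[OF Gc] by simp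
  have ent: "mat_delete G q q $$ (i,j) = G $$ (i,j)" if "i < q" "j < q" for i j
    using Gc that by (simp add: mat_delete_def)
  have "transpose_mat (mat_delete G q q) = mat_delete G q q"
    by (rule eq_matI) (use c Gc ent symmetric_entry[OF Gc sym] in auto)
  then show ?thesis
    using G c pos_def_int_mat_delete_last[OF Gc pd] ent unfolding CC_def by auto
qed

lemma EE_mat_delete_last:
  assumes G: "G \<in> EE n M (Suc q)" and r: "dim_row M \<le> q"
  shows "mat_delete G q q \<in> EE n M q"
proof -
  have "G \<in> carrier_mat (Suc q) (Suc q)" using G unfolding EE_def CC_def by auto
  then show ?thesis
    using CC_mat_delete_last[of G n q] G r unfolding EE_def by (auto simp: mat_delete_def)
qed

lemma det_tilde:
  assumes M: "M \<in> carrier_mat (Suc q) (Suc q)"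
  shows "det (tilde M) = det M - (M $$ (q,q) - 3) * det (mat_delete M q q)"
proof -
  have d: "dim_row M = Suc q" "dim_col M = Suc q" using M by auto
  have Tc: "tilde M \<in> carrier_mat (Suc q) (Suc q)" unfolding tilde_def d by simp
  have del: "mat_delete (tilde M) q j = mat_delete M q j" if "j < Suc q" for j
    by (rule eq_matI) (auto simp: mat_delete_def tilde_def d)
  have T: "tilde M $$ (q,j) = M $$ (q,j) - (if j = q then M $$ (q,q) - 3 else 0)" if "j < Suc q" for j
    using that unfolding tilde_def d by auto
  have "det (tilde M) = (\<Sum>j<Suc q. tilde M $$ (q,j) * cofactor (tilde M) q j)"
    using laplace_expansion_row[OF Tc, of q] by simp
  also have "\<dots> = (\<Sum>j<Suc q. M $$ (q,j) * cofactor M q j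
                      - (if j = q then (M $$ (q,q) - 3) * cofactor M q q else 0))"
    by (intro sum.cong refl) (auto simp: T del cofactor_def algebra_simps)
  also have "\<dots> = det M - (M $$ (q,q) - 3) * cofactor M q q"
    using laplace_expansion_row[OF M, of q] by (simp add: sum_subtractf)
  also have "cofactor M q q = det (mat_delete M q q)"
    unfolding cofactor_def by (simp add: mult_2[symmetric] power_mult)
  finally show ?thesis .
qed

lemma schur_border_estimate:
  fixes a c d D D' Q :: real
  assumes D': "D' > 0" and c: "c > 0" and cD: "c * D' < D"
    and QF: "d * D = Q - 2 * c * (a - D) * D" and schur: "D' * Q \<ge> D * a\<^sup>2"
  shows "c * D < d"
proof -
  have D: "D > 0" using cD c D' by (smt (verit) mult_pos_pos)
  have "D * (d * D') = D' * Q - 2 * c * (a - D) * D * D'"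
    using arg_cong[OF QF, of "\<lambda>t. D' * t"] by (simp add: algebra_simps)
  then have "D * (d * D') \<ge> D * a\<^sup>2 - 2 * c * (a - D) * D * D'"
    using schur by linarith
  also have "D * a\<^sup>2 - 2 * c * (a - D) * D * D' = D * ((a - c * D')\<^sup>2 + D' * (2 * c * D - c\<^sup>2 * D'))"
    by (simp add: algebra_simps power2_eq_square)
  finally have "d * D' \<ge> (a - c * D')\<^sup>2 + D' * (2 * c * D - c\<^sup>2 * D')"
    using D by simp
  then have "d * D' \<ge> (2 * c * D - c\<^sup>2 * D') * D'"
    by (smt (verit) mult.commute zero_le_power2)
  then have "d \<ge> 2 * c * D - c\<^sup>2 * D'" using D' by simp
  moreover have "2 * c * D - c\<^sup>2 * D' - c * D = c * (D - c * D')"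
    by (simp add: algebra_simps power2_eq_square)
  moreover have "c * (D - c * D') > 0" using c cD by simp
  ultimately show ?thesis by linarith
qed

section \<open>Bordering by a perturbed copy of the last row\<close>

definition extend_mat :: "int \<Rightarrow> int mat \<Rightarrow> int mat" where
  "extend_mat n E = mat (Suc (dim_row E)) (Suc (dim_row E)) (\<lambda>(i,j).
     if i < dim_row E \<and> j < dim_row E then E $$ (i,j)
     else if i = dim_row E \<and> j = dim_row E then n
     else if i = dim_row E then (if j = dim_row E - 1 then 3 else E $$ (dim_row E - 1, j))
     else (if i = dim_row E - 1 then 3 else E $$ (i, dim_row E - 1)))"

context
  fixes E :: "int mat" and q :: nat
  assumes E: "E \<in> carrier_mat (Suc q) (Suc q)"
begin

lemma extend_mat_carrier: "extend_mat n E \<in> carrier_mat (Suc (Suc q)) (Suc (Suc q))"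
  using E unfolding extend_mat_def by simp

lemma extend_mat_leading: "i < Suc q \<Longrightarrow> j < Suc q \<Longrightarrow> extend_mat n E $$ (i,j) = E $$ (i,j)"
  using E unfolding extend_mat_def by simp

lemma mat_delete_extend_mat: "mat_delete (extend_mat n E) (Suc q) (Suc q) = E"
  using E by (intro eq_matI) (auto simp: mat_delete_def extend_mat_def)

lemma extend_mat_symmetric:
  assumes "transpose_mat E = E"
  shows "transpose_mat (extend_mat n E) = extend_mat n E"
  using E symmetric_entry[OF E assms] by (intro eq_matI) (auto simp: extend_mat_def)

lemma qform_extend_mat:
  assumes sym: "transpose_mat E = E" and diag: "E $$ (q,q) = n"
  shows "qform (extend_mat n E) x
           = qform E (\<lambda>i. x i + x (Suc q) * coord_vec q i) - 2 * (real_of_int n - 3) * x q * x (Suc q)"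
proof -
  define F where "F = extend_mat n E"
  define s where "s = x (Suc q)"
  define b where "b = (\<Sum>i<Suc q. x i * real_of_int (E $$ (i,q)))"
  have symF: "transpose_mat F = F" unfolding F_def using sym by (rule extend_mat_symmetric)
  have col: "(\<Sum>i<Suc q. x i * real_of_int (F $$ (i, Suc q))) = b + (3 - real_of_int n) * x q"
  proof -
    have "(\<Sum>i<Suc q. x i * real_of_int (F $$ (i, Suc q)))
        = (\<Sum>i<Suc q. x i * real_of_int (E $$ (i,q)) + (if i = q then (3 - real_of_int n) * x q else 0))"
      using E diag by (intro sum.cong refl) (auto simp: F_def extend_mat_def algebra_simps)
    then show ?thesis unfolding b_def by (simp add: sum.distrib)
  qed
  have bordered: "qform F x = qform E x + 2 * s * (b + (3 - real_of_int n) * x q) + real_of_int n * s\<^sup>2"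
    using qform_bordered[OF extend_mat_carrier symF[unfolded F_def], of x] col E
    unfolding F_def s_def mat_delete_extend_mat by (simp add: extend_mat_def)
  have right: "bilin E x (coord_vec q) = b" using E by (simp add: bilin_coord_vec_right b_def)
  have left: "bilin E (coord_vec q) x = b" using bilin_commute[OF E sym] right by simp
  have diag': "qform E (coord_vec q) = real_of_int n" using bilin_coord_vec[of q E q] E diag by simp
  have shifted: "qform E (\<lambda>i. x i + s * coord_vec q i) = qform E x + 2 * s * b + s\<^sup>2 * real_of_int n"
    unfolding qform_add_scaled right left diag' by simp
  show ?thesis using bordered shifted unfolding F_def s_def by (simp add: algebra_simps)
qed

lemma pos_def_extend_mat:
  assumes sym: "transpose_mat E = E" and pd: "pos_def_int E" and diag: "E $$ (q,q) = n"
    and n3: "n > 3" and good: "(n - 3) * det (mat_delete E q q) < det E"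
  shows "pos_def_int (extend_mat n E)"
  unfolding pos_def_int_iff_qform
proof (intro allI impI)
  fix x :: "nat \<Rightarrow> real"
  assume "\<exists>i<dim_row (extend_mat n E). x i \<noteq> 0"
  moreover have "dim_row (extend_mat n E) = Suc (Suc q)" by (rule carrier_matD(1)[OF extend_mat_carrier])
  ultimately obtain i where i: "i < Suc (Suc q)" "x i \<noteq> 0" by auto
  define c where "c = real_of_int n - 3"
  define u where "u = (\<lambda>i. x i + x (Suc q) * coord_vec q i)"
  have c: "c > 0" unfolding c_def using n3 by simp
  have "real_of_int ((n - 3) * det (mat_delete E q q)) \<le> real_of_int (det E)"
    using good by (simp only: of_int_le_iff)
  then have lower: "qform E u \<ge> c * (u q)\<^sup>2"
    by (intro qform_ge_last_coord[OF E sym pd]) (simp add: c_def)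
  have F: "qform (extend_mat n E) x = qform E u - 2 * c * x q * x (Suc q)"
    unfolding qform_extend_mat[OF sym diag] u_def c_def ..
  show "qform (extend_mat n E) x > 0"
  proof (cases "x q = 0 \<and> x (Suc q) = 0")
    case True
    then have "i < dim_row E" "u i \<noteq> 0" using i E by (auto simp: u_def less_Suc_eq)
    then have "qform E u > 0" by (rule pd[unfolded pos_def_int_iff_qform, rule_format, OF exI, OF conjI])
    then show ?thesis using F True by simp
  next
    case False
    have "c * (x q + x (Suc q))\<^sup>2 - 2 * c * x q * x (Suc q) = c * ((x q)\<^sup>2 + (x (Suc q))\<^sup>2)"
      by (simp add: algebra_simps power2_eq_square)
    moreover have "c * ((x q)\<^sup>2 + (x (Suc q))\<^sup>2) > 0"
      using False c by (simp add: sum_power2_gt_zero_iff)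
    ultimately show ?thesis using F lower by (simp add: u_def coord_vec_def)
  qed
qed

text \<open>With z the last adjugate column of F = extend_mat n E, Q_F(z) = det F det E; writing
Q_F(z) through Q_E and bounding Q_E by the Schur inequality leaves a square plus
det E' (2c det E - c^2 det E').\<close>

lemma det_extend_mat_gt:
  assumes sym: "transpose_mat E = E" and pd: "pos_def_int E" and diag: "E $$ (q,q) = n"
    and n3: "n > 3" and good: "(n - 3) * det (mat_delete E q q) < det E"
  shows "(n - 3) * det E < det (extend_mat n E)"
proof -
  define F where "F = extend_mat n E"
  define c where "c = real_of_int n - 3"
  define D where "D = real_of_int (det E)"
  define D' where "D' = real_of_int (det (mat_delete E q q))"
  define z where "z = (\<lambda>i. real_of_int (adj_mat F $$ (i, Suc q)))"
  define u where "u = (\<lambda>i. z i + z (Suc q) * coord_vec q i)"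
  define a where "a = u q"
  have c: "c > 0" unfolding c_def using n3 by simp
  have D'pos: "D' > 0" unfolding D'_def
    using det_mat_delete_last_pos[OF E pd] by simp
  have cD: "c * D' < D"
    using good unfolding c_def D_def D'_def by (metis of_int_less_iff of_int_mult of_int_diff of_int_numeral)
  have zp: "z (Suc q) = D" and Qz: "qform F z = real_of_int (det F) * D"
    using adj_mat_column[OF extend_mat_carrier[unfolded F_def[symmetric]], of "Suc q"]
    unfolding z_def D_def F_def mat_delete_extend_mat by auto
  have zq: "z q = a - D" unfolding a_def u_def zp by (simp add: coord_vec_def)
  have "real_of_int (det F) * D = qform E u - 2 * c * (a - D) * D"
    using Qz qform_extend_mat[OF sym diag, of z] zp zq unfolding F_def u_def c_def by simp
  moreover have "D' * qform E u \<ge> D * a\<^sup>2"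
    using det_delete_mult_qform_ge[OF E sym pd] unfolding D_def D'_def a_def .
  ultimately have "c * D < real_of_int (det F)" by (rule schur_border_estimate[OF D'pos c cD])
  then show ?thesis unfolding F_def c_def D_def
    by (metis of_int_less_iff of_int_mult of_int_diff of_int_numeral)
qed

end

lemma extend_mat_EE:
  assumes E: "E \<in> EE n M (Suc q)" and r: "dim_row M \<le> Suc q"
    and n4: "n mod 4 = 3" and n3: "n > 3"
    and good: "(n - 3) * det (mat_delete E q q) < det E"
  shows "extend_mat n E \<in> EE n M (Suc (Suc q))"
proof -
  have Ec: "E \<in> carrier_mat (Suc q) (Suc q)" and sym: "transpose_mat E = E"
    and pd: "pos_def_int E" and diag: "\<And>i. i < Suc q \<Longrightarrow> E $$ (i,i) = n"
    and md: "\<And>i j. i < Suc q \<Longrightarrow> j < Suc q \<Longrightarrow> E $$ (i,j) mod 4 = n mod 4"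
    and lead: "\<And>i j. i < dim_row M \<Longrightarrow> j < dim_row M \<Longrightarrow> E $$ (i,j) = M $$ (i,j)"
    using E unfolding EE_def CC_def by auto
  have "\<forall>i<Suc (Suc q). extend_mat n E $$ (i,i) = n"
    using Ec diag by (auto simp: extend_mat_def)
  moreover have "\<forall>i<Suc (Suc q). \<forall>j<Suc (Suc q). extend_mat n E $$ (i,j) mod 4 = n mod 4"
    using Ec md n4 by (auto simp: extend_mat_def)
  moreover have "\<forall>i<dim_row M. \<forall>j<dim_row M. extend_mat n E $$ (i,j) = M $$ (i,j)"
    using r lead extend_mat_leading[OF Ec] by auto
  ultimately show ?thesis
    using extend_mat_carrier[OF Ec] extend_mat_symmetric[OF Ec sym]
      pos_def_extend_mat[OF Ec sym pd diag n3 good]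
    unfolding EE_def CC_def by auto
qed

section \<open>Growth of the maximal determinant\<close>

lemma det_gt_if_det_tilde_pos:
  assumes M: "M \<in> CC n (Suc q)" and tilde: "det (tilde M) > 0"
  shows "(n - 3) * det (mat_delete M q q) < det M"
  using det_tilde[of M q] M tilde unfolding CC_def by auto

lemma ex_max_det_EE:
  assumes "n > 0" "EE n M m \<noteq> {}"
  obtains E where "E \<in> EE n M m" "det E = Max (det ` EE n M m)"
proof -
  have "Max (det ` EE n M m) \<in> det ` EE n M m"
    using finite_EE[OF assms(1)] assms(2) by (intro Max_in) auto
  then show ?thesis using that by auto
qed

lemma ex_EE_det_gt:
  assumes n4: "n mod 4 = 3" and n3: "n > 3" and r: "1 \<le> r"
    and M: "M \<in> CC n r" and tilde: "det (tilde M) > 0" and m: "r \<le> m"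
  shows "\<exists>E\<in>EE n M m. (n - 3) * det (mat_delete E (m - 1) (m - 1)) < det E"
  using m
proof (induction m rule: dec_induct)
  case base
  obtain q where q: "r = Suc q" using r by (cases r) auto
  show ?case
    using EE_self[OF M] det_gt_if_det_tilde_pos[OF M[unfolded q] tilde] q by simp
next
  case (step m)
  obtain q where q: "m = Suc q" using step.hyps(1) r by (cases m) auto
  obtain E where E: "E \<in> EE n M (Suc q)" and good: "(n - 3) * det (mat_delete E q q) < det E"
    using step.IH q by auto
  have dM: "dim_row M \<le> Suc q" using M step.hyps(1) q unfolding CC_def by auto
  have Ec: "E \<in> carrier_mat (Suc q) (Suc q)" using E unfolding EE_def CC_def by auto
  have "(n - 3) * det E < det (extend_mat n E)"
    using E good det_extend_mat_gt[OF Ec] n3 unfolding EE_def CC_def by auto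
  then have "(n - 3) * det (mat_delete (extend_mat n E) m m) < det (extend_mat n E)"
    using mat_delete_extend_mat[OF Ec, of n] q by simp
  then show ?case using extend_mat_EE[OF E dM n4 n3 good] q by auto
qed

lemma Max_det_extend_gt:
  assumes n4: "n mod 4 = 3" and n3: "n > 3" and dM: "dim_row M \<le> Suc q"
    and E: "E \<in> EE n M (Suc q)" and max: "det E = Max (det ` EE n M (Suc q))"
    and good: "(n - 3) * det (mat_delete E q q) < det E"
  shows "(n - 3) * Max (det ` EE n M (Suc q)) < Max (det ` EE n M (Suc (Suc q)))"
proof -
  have Ec: "E \<in> carrier_mat (Suc q) (Suc q)" using E unfolding EE_def CC_def by auto
  have "(n - 3) * det E < det (extend_mat n E)"
    using E good det_extend_mat_gt[OF Ec] n3 unfolding EE_def CC_def by auto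
  also have "det (extend_mat n E) \<le> Max (det ` EE n M (Suc (Suc q)))"
    using finite_EE extend_mat_EE[OF E dM n4 n3 good] n3 by (intro Max_ge) auto
  finally show ?thesis using max by simp
qed

lemma Max_det_EE_Suc_gt:
  assumes n4: "n mod 4 = 3" and n3: "n > 3" and r: "1 \<le> r"
    and M: "M \<in> CC n r" and tilde: "det (tilde M) > 0" and m: "r \<le> m"
  shows "(n - 3) * Max (det ` EE n M m) < Max (det ` EE n M (Suc m))"
  using m
proof (induction m rule: dec_induct)
  case base
  obtain q where q: "r = Suc q" using r by (cases r) auto
  have dM: "dim_row M = r" using M unfolding CC_def by auto
  have "M \<in> EE n M (Suc q)" "det M = Max (det ` EE n M (Suc q))"
    using EE_self[OF M] q by auto
  from Max_det_extend_gt[OF n4 n3 _ this det_gt_if_det_tilde_pos[OF M[unfolded q] tilde]]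
  show ?case using dM q by simp
next
  case (step m)
  have dM: "dim_row M \<le> m" using M step.hyps(1) unfolding CC_def by auto
  have "EE n M (Suc m) \<noteq> {}" using ex_EE_det_gt[OF n4 n3 r M tilde, of "Suc m"] step.hyps(1) by auto
  moreover have "n > 0" using n3 by simp
  ultimately obtain E where E: "E \<in> EE n M (Suc m)" and max: "det E = Max (det ` EE n M (Suc m))"
    using ex_max_det_EE by blast
  have "det (mat_delete E m m) \<le> Max (det ` EE n M m)"
    using finite_EE EE_mat_delete_last[OF E dM] n3 by (intro Max_ge) auto
  then have "(n - 3) * det (mat_delete E m m) \<le> (n - 3) * Max (det ` EE n M m)"
    using n3 by (intro mult_left_mono) auto
  then have "(n - 3) * det (mat_delete E m m) < det E" using step.IH max by simp
  then show ?case using Max_det_extend_gt[OF n4 n3 _ E max] dM by simp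
qed

theorem theorem7:
  fixes n :: int and r m :: nat and M :: "int mat"
  assumes "n mod 4 = 3" and "n > 3"
    and "1 \<le> r" and "r < m"
    and "M \<in> CC n r"
    and "det (tilde M) > 0"
  shows "Max (det ` EE n M m) > (n - 3) * Max (det ` EE n M (m - 1))"
proof -
  obtain k where m: "m = Suc k" and "r \<le> k" using assms(4) by (cases m) auto
  then show ?thesis using Max_det_EE_Suc_gt[OF assms(1,2,3,5,6)] by simp
qed

end
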